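(* Let $\Phi$ be a Young function, $Q\subset\mathbb{R}^N$ bounded open and $\{T(x)\}$ an $N$-dimensional dynamical system on $(\Omega,\mathscr{M},\mu)$. Then every $f\in\mathcal{C}(\overline{Q},L^\infty(\Omega))$ is admissible.
   Context: Young function: $\Phi:[0,\infty)\to[0,\infty)$ continuous, convex, $\Phi(t)>0$ for $t>0$, $\Phi(t)/t\to0$ at $0$, $\to\infty$ at $\infty$. $N$-dimensional dynamical system: invertible bimeasurable maps $T(x)$ of the probability space $(\Omega,\mathscr{M},\mu)$, $T(0)=\mathrm{id}$, $T(x_1+x_2)=T(x_1)\circ T(x_2)$, $\mu$-preserving, jointly measurable in $(x,\omega)$. $\mathcal{C}(\overline{Q},L^\infty(\Omega))$ is the space of continuous maps $\overline Q\to L^\infty(\Omega)$. An element $f\in L^\Phi(Q\times\Omega)$ is admissible if $f_T:(x,\omega)\mapsto f(x,T(x)\omega)$ defines an element of $L^\Phi(Q\times\Omega)$. *)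

theory Defs
  imports "HOL-Probability.Probability"
begin

definition young_function :: "(real \<Rightarrow> real) \<Rightarrow> bool" where
  "young_function \<Phi> \<longleftrightarrow>
     continuous_on {0..} \<Phi> \<and> convex_on {0..} \<Phi> \<and>
     (\<forall>t\<ge>0. \<Phi> t \<ge> 0) \<and> (\<forall>t>0. \<Phi> t > 0) \<and>
     ((\<lambda>t. \<Phi> t / t) \<longlongrightarrow> 0) (at_right 0) \<and>
     filterlim (\<lambda>t. \<Phi> t / t) at_top at_top"

text \<open>N-dimensional dynamical system on the probability space M (N = DIM('a)).\<close>
definition dynamical_system :: "'w measure \<Rightarrow> ('a::euclidean_space \<Rightarrow> 'w \<Rightarrow> 'w) \<Rightarrow> bool" where
  "dynamical_system M T \<longleftrightarrow>
     prob_space M \<and>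
     (\<forall>x. bij_betw (T x) (space M) (space M) \<and>
          T x \<in> M \<rightarrow>\<^sub>M M \<and> distr M M (T x) = M \<and>
          the_inv_into (space M) (T x) \<in> M \<rightarrow>\<^sub>M M) \<and>
     (\<forall>\<omega>\<in>space M. T 0 \<omega> = \<omega>) \<and>
     (\<forall>x1 x2. \<forall>\<omega>\<in>space M. T (x1 + x2) \<omega> = T x1 (T x2 \<omega>)) \<and>
     (\<lambda>(x, \<omega>). T x \<omega>) \<in> (lebesgue \<Otimes>\<^sub>M M) \<rightarrow>\<^sub>M M"

text \<open>Orlicz space L^Phi(N) (as a set of representatives).\<close>
definition orlicz_space :: "(real \<Rightarrow> real) \<Rightarrow> 'b measure \<Rightarrow> ('b \<Rightarrow> real) set" where
  "orlicz_space \<Phi> N = {u \<in> borel_measurable N.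
      \<exists>\<delta>>0. (\<integral>\<^sup>+ z. ennreal (\<Phi> (\<bar>u z\<bar> / \<delta>)) \<partial>N) < \<infinity>}"

text \<open>f (given by its slices f x, each a representative of an element of L^infty(Omega))
  is a continuous map from K to L^infty(Omega).\<close>
definition C_Linf :: "'a::metric_space set \<Rightarrow> 'w measure \<Rightarrow> ('a \<Rightarrow> 'w \<Rightarrow> real) \<Rightarrow> bool" where
  "C_Linf K M f \<longleftrightarrow>
     (\<forall>x\<in>K. f x \<in> borel_measurable M \<and> esssup M (\<lambda>\<omega>. ereal \<bar>f x \<omega>\<bar>) < \<infinity>) \<and>
     (\<forall>x\<in>K. \<forall>\<epsilon>>0. \<exists>\<delta>>0. \<forall>y\<in>K. dist y x < \<delta> \<longrightarrow>
         esssup M (\<lambda>\<omega>. ereal \<bar>f y \<omega> - f x \<omega>\<bar>) < ereal \<epsilon>)"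

definition defines_orlicz ::
  "(real \<Rightarrow> real) \<Rightarrow> 'a::euclidean_space set \<Rightarrow> 'w measure \<Rightarrow> ('a \<Rightarrow> 'w \<Rightarrow> real) \<Rightarrow> bool" where
  "defines_orlicz \<Phi> Q M g \<longleftrightarrow>
     (\<exists>u \<in> orlicz_space \<Phi> (lebesgue_on Q \<Otimes>\<^sub>M M).
        \<forall>x\<in>Q. AE \<omega> in M. u (x, \<omega>) = g x \<omega>)"

definition admissible ::
  "(real \<Rightarrow> real) \<Rightarrow> 'a::euclidean_space set \<Rightarrow> 'w measure \<Rightarrow> ('a \<Rightarrow> 'w \<Rightarrow> 'w)
     \<Rightarrow> ('a \<Rightarrow> 'w \<Rightarrow> real) \<Rightarrow> bool" where
  "admissible \<Phi> Q M T f \<longleftrightarrow>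
     defines_orlicz \<Phi> Q M f \<and> defines_orlicz \<Phi> Q M (\<lambda>x \<omega>. f x (T x \<omega>))"

end

theory Submission imports Defs begin

text \<open>
  A continuous map \<open>f\<close> from the compact set \<open>closure Q\<close> into \<open>L\<^sup>\<infinity>(\<Omega>)\<close> is uniformly
  approximated by step functions that are constant, with values in finitely many slices \<open>f c\<close>,
  on the cells of a finite Borel partition of \<open>Q\<close>. These step functions are jointly measurable
  on \<open>Q \<times> \<Omega>\<close>, so their pointwise limit, truncated at an essential bound of \<open>f\<close>, is a bounded
  jointly measurable version of \<open>f\<close>. Composing it with the jointly measurable map
  \<open>(x, \<omega>) \<mapsto> (x, T x \<omega>)\<close> gives a bounded version of \<open>f\<^sub>T\<close>, because each \<open>T x\<close> preserves \<open>\<mu>\<close>.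
  Bounded measurable functions on the finite measure space \<open>Q \<times> \<Omega>\<close> lie in every Orlicz space.
\<close>

lemma young_function_bounded_on_unit_interval:
  assumes "young_function \<Phi>"
  obtains C where "\<And>t. 0 \<le> t \<Longrightarrow> t \<le> 1 \<Longrightarrow> \<Phi> t \<le> C"
proof -
  have "continuous_on {0..1} \<Phi>"
    using assms unfolding young_function_def by (auto elim: continuous_on_subset)
  then have "compact (\<Phi> ` {0..1})" by (rule compact_continuous_image) simp
  then obtain C where "\<forall>y\<in>\<Phi> ` {0..1}. y \<le> C"
    using compact_imp_bounded bounded_real by (metis abs_le_D1)
  then show ?thesis using that by force
qed

lemma (in finite_measure) bounded_in_orlicz_space:
  assumes "young_function \<Phi>" and "w \<in> borel_measurable M" and "\<And>z. \<bar>w z\<bar> \<le> B"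
  shows "w \<in> orlicz_space \<Phi> M"
proof -
  obtain C where C: "\<And>t. 0 \<le> t \<Longrightarrow> t \<le> 1 \<Longrightarrow> \<Phi> t \<le> C"
    using young_function_bounded_on_unit_interval[OF assms(1)] by blast
  define d where "d = \<bar>B\<bar> + 1"
  have "d > 0" by (simp add: d_def)
  have "(\<integral>\<^sup>+ z. ennreal (\<Phi> (\<bar>w z\<bar> / d)) \<partial>M) \<le> (\<integral>\<^sup>+ z. ennreal C \<partial>M)"
  proof (rule nn_integral_mono)
    fix z
    have "\<bar>w z\<bar> / d \<le> 1" using assms(3)[of z] by (simp add: d_def)
    then show "ennreal (\<Phi> (\<bar>w z\<bar> / d)) \<le> ennreal C"
      using C \<open>d > 0\<close> by (intro ennreal_leI) auto
  qed
  also have "\<dots> = ennreal C * emeasure M (space M)" by simp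
  also have "\<dots> < \<infinity>" using emeasure_finite by (simp add: ennreal_mult_eq_top_iff less_top[symmetric])
  finally show ?thesis unfolding orlicz_space_def using assms(2) \<open>d > 0\<close> by blast
qed

lemma AE_le_of_esssup_le:
  assumes "esssup M (\<lambda>\<omega>. ereal (h \<omega>)) \<le> ereal e"
  shows "AE \<omega> in M. h \<omega> \<le> e"
  using esssup_AE[of "\<lambda>\<omega>. ereal (h \<omega>)" M]
proof eventually_elim
  case (elim \<omega>)
  then have "ereal (h \<omega>) \<le> ereal e" using assms by (rule order.trans)
  then show ?case by simp
qed

lemma AE_le_real_of_esssup:
  assumes "esssup M (\<lambda>\<omega>. ereal (h \<omega>)) < \<infinity>"
  shows "AE \<omega> in M. h \<omega> \<le> real_of_ereal (esssup M (\<lambda>\<omega>. ereal (h \<omega>)))"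
  using assms by (intro AE_le_of_esssup_le) (cases "esssup M (\<lambda>\<omega>. ereal (h \<omega>))"; simp)

lemma measurable_least_index:
  fixes n :: nat
  assumes "\<And>i. i < n \<Longrightarrow> B i \<inter> space N \<in> sets N"
    and "\<And>x. x \<in> space N \<Longrightarrow> \<exists>i<n. x \<in> B i"
  shows "(\<lambda>x. LEAST i. i < n \<and> x \<in> B i) \<in> N \<rightarrow>\<^sub>M count_space {..<n}"
proof (subst measurable_count_space_eq2_countable, intro conjI ballI)
  show "(\<lambda>x. LEAST i. i < n \<and> x \<in> B i) \<in> space N \<rightarrow> {..<n}"
  proof (rule funcsetI)
    fix x assume "x \<in> space N"
    from LeastI_ex[OF assms(2)[OF this]] show "(LEAST i. i < n \<and> x \<in> B i) \<in> {..<n}" by simp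
  qed
next
  fix a assume "a \<in> {..<n}"
  have least_eq: "(LEAST i. i < n \<and> x \<in> B i) = a \<longleftrightarrow> x \<in> B a \<and> (\<forall>j<a. x \<notin> B j)"
    if "x \<in> space N" for x
  proof
    assume "(LEAST i. i < n \<and> x \<in> B i) = a"
    then show "x \<in> B a \<and> (\<forall>j<a. x \<notin> B j)"
      using LeastI_ex[OF assms(2)[OF that]] not_less_Least[of _ "\<lambda>i. i < n \<and> x \<in> B i"]
        \<open>a \<in> {..<n}\<close> by auto
  next
    assume "x \<in> B a \<and> (\<forall>j<a. x \<notin> B j)"
    then show "(LEAST i. i < n \<and> x \<in> B i) = a"
      using \<open>a \<in> {..<n}\<close> by (intro Least_equality) (auto simp: not_less[symmetric])
  qed
  have "(\<lambda>x. LEAST i. i < n \<and> x \<in> B i) -` {a} \<inter> space N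
      = (B a \<inter> space N) - (\<Union>j<a. B j \<inter> space N)"
    using least_eq by auto
  also have "\<dots> \<in> sets N" using assms(1) \<open>a \<in> {..<n}\<close> by (intro sets.Diff sets.finite_UN) auto
  finally show "(\<lambda>x. LEAST i. i < n \<and> x \<in> B i) -` {a} \<inter> space N \<in> sets N" .
qed

lemma C_Linf_finite_net:
  assumes "C_Linf K M f" and "compact K" and "e > 0"
  obtains cs :: "'a::metric_space list" and r where "set cs \<subseteq> K"
    and "K \<subseteq> (\<Union>c\<in>set cs. ball c (r c))"
    and "\<And>c y. c \<in> set cs \<Longrightarrow> y \<in> K \<Longrightarrow> y \<in> ball c (r c) \<Longrightarrow>
           esssup M (\<lambda>\<omega>. ereal \<bar>f y \<omega> - f c \<omega>\<bar>) < ereal e"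
proof -
  have "\<forall>c\<in>K. \<exists>\<delta>>0. \<forall>y\<in>K. dist y c < \<delta> \<longrightarrow>
      esssup M (\<lambda>\<omega>. ereal \<bar>f y \<omega> - f c \<omega>\<bar>) < ereal e"
    using assms(1,3) unfolding C_Linf_def by blast
  then obtain r where r: "\<And>c. c \<in> K \<Longrightarrow> r c > 0"
    and close: "\<And>c y. c \<in> K \<Longrightarrow> y \<in> K \<Longrightarrow> dist y c < r c \<Longrightarrow>
        esssup M (\<lambda>\<omega>. ereal \<bar>f y \<omega> - f c \<omega>\<bar>) < ereal e"
    by metis
  have "K \<subseteq> (\<Union>c\<in>K. ball c (r c))" using r by force
  then obtain C where "C \<subseteq> K" "finite C" "K \<subseteq> (\<Union>c\<in>C. ball c (r c))"
    using compactE_image[OF assms(2), of K "\<lambda>c. ball c (r c)"] by blast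
  moreover obtain cs where "set cs = C" using finite_list[OF \<open>finite C\<close>] by blast
  ultimately show ?thesis
    using that[of cs r] close by (simp add: dist_commute subset_iff)
qed

lemma C_Linf_ess_bounded:
  assumes "C_Linf K M f" and "compact K"
  obtains B where "0 \<le> B" and "\<And>x. x \<in> K \<Longrightarrow> AE \<omega> in M. \<bar>f x \<omega>\<bar> \<le> B"
proof -
  obtain cs r where cs: "set cs \<subseteq> K" and cover: "K \<subseteq> (\<Union>c\<in>set cs. ball c (r c))"
    and close: "\<And>c y. c \<in> set cs \<Longrightarrow> y \<in> K \<Longrightarrow> y \<in> ball c (r c) \<Longrightarrow>
        esssup M (\<lambda>\<omega>. ereal \<bar>f y \<omega> - f c \<omega>\<bar>) < ereal 1"
    using C_Linf_finite_net[OF assms zero_less_one] by blast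
  define ess where "ess c = real_of_ereal (esssup M (\<lambda>\<omega>. ereal \<bar>f c \<omega>\<bar>))" for c
  define B where "B = 1 + (\<Sum>c\<in>set cs. max 0 (ess c))"
  have "AE \<omega> in M. \<bar>f x \<omega>\<bar> \<le> B" if "x \<in> K" for x
  proof -
    obtain c where c: "c \<in> set cs" "x \<in> ball c (r c)" using cover \<open>x \<in> K\<close> by blast
    have "esssup M (\<lambda>\<omega>. ereal \<bar>f c \<omega>\<bar>) < \<infinity>" using assms(1) c(1) cs unfolding C_Linf_def by blast
    then have ae: "AE \<omega> in M. \<bar>f c \<omega>\<bar> \<le> ess c \<and> \<bar>f x \<omega> - f c \<omega>\<bar> \<le> 1"
      unfolding ess_def using AE_le_of_esssup_le[OF less_imp_le[OF close[OF c(1) that c(2)]]]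
      by (intro AE_conjI AE_le_real_of_esssup)
    have le_sum: "max 0 (ess c) \<le> (\<Sum>c\<in>set cs. max 0 (ess c))"
      using c(1) by (intro member_le_sum) auto
    from ae show ?thesis by eventually_elim (use le_sum in \<open>auto simp: B_def\<close>)
  qed
  moreover have "0 \<le> B" unfolding B_def by (simp add: sum_nonneg)
  ultimately show ?thesis using that by blast
qed

lemma C_Linf_step_approximation:
  assumes "C_Linf K M f" and "compact K" and "Q \<subseteq> K" and "Q \<in> sets lebesgue" and "e > 0"
  obtains g where "g \<in> borel_measurable (lebesgue_on Q \<Otimes>\<^sub>M M)"
    and "\<And>x. x \<in> Q \<Longrightarrow> AE \<omega> in M. \<bar>g (x, \<omega>) - f x \<omega>\<bar> \<le> e"
proof -
  obtain cs r where cs: "set cs \<subseteq> K" and cover: "K \<subseteq> (\<Union>c\<in>set cs. ball c (r c))"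
    and close: "\<And>c y. c \<in> set cs \<Longrightarrow> y \<in> K \<Longrightarrow> y \<in> ball c (r c) \<Longrightarrow>
        esssup M (\<lambda>\<omega>. ereal \<bar>f y \<omega> - f c \<omega>\<bar>) < ereal e"
    using C_Linf_finite_net[OF assms(1,2,5)] by blast
  define B where "B i = ball (cs ! i) (r (cs ! i))" for i
  define idx where "idx x = (LEAST i. i < length cs \<and> x \<in> B i)" for x
  define g where "g z = f (cs ! idx (fst z)) (snd z)" for z
  have covered: "\<exists>i<length cs. x \<in> B i" if x: "x \<in> Q" for x
  proof -
    obtain c where "c \<in> set cs" "x \<in> ball c (r c)" using cover assms(3) x by blast
    then show ?thesis unfolding B_def by (metis in_set_conv_nth)
  qed
  have "B i \<inter> space (lebesgue_on Q) \<in> sets (lebesgue_on Q)" for i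
    using assms(4) fmeasurableD[OF lmeasurable_ball]
    by (subst sets_restrict_space_iff) (auto simp: B_def)
  then have "idx \<in> lebesgue_on Q \<rightarrow>\<^sub>M count_space {..<length cs}"
    unfolding idx_def using covered assms(4) by (intro measurable_least_index) auto
  then have cell_index: "(\<lambda>z. idx (fst z)) \<in> lebesgue_on Q \<Otimes>\<^sub>M M \<rightarrow>\<^sub>M count_space {..<length cs}"
    by (rule measurable_compose[OF measurable_fst])
  have slice: "(\<lambda>z. f (cs ! i) (snd z)) \<in> borel_measurable (lebesgue_on Q \<Otimes>\<^sub>M M)"
    if "i \<in> {..<length cs}" for i
  proof -
    have "cs ! i \<in> K" using cs that by auto
    then have "f (cs ! i) \<in> borel_measurable M" using assms(1) unfolding C_Linf_def by blast
    then show ?thesis by (rule measurable_compose[OF measurable_snd])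
  qed
  have "g \<in> borel_measurable (lebesgue_on Q \<Otimes>\<^sub>M M)"
    unfolding g_def by (rule measurable_compose_countable'[OF slice cell_index]) simp_all
  moreover have "AE \<omega> in M. \<bar>g (x, \<omega>) - f x \<omega>\<bar> \<le> e" if "x \<in> Q" for x
  proof -
    have "idx x < length cs \<and> x \<in> B (idx x)"
      unfolding idx_def by (rule LeastI_ex[OF covered[OF that]])
    then have "cs ! idx x \<in> set cs" and "x \<in> ball (cs ! idx x) (r (cs ! idx x))"
      by (simp_all add: B_def)
    with that assms(3) have "esssup M (\<lambda>\<omega>. ereal \<bar>f x \<omega> - f (cs ! idx x) \<omega>\<bar>) < ereal e"
      by (intro close) auto
    then show ?thesis
      unfolding g_def by (auto intro!: AE_le_of_esssup_le simp: abs_minus_commute)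
  qed
  ultimately show ?thesis by (rule that)
qed

lemma LIMSEQ_of_dist_le_inverse_Suc:
  fixes a :: "nat \<Rightarrow> real"
  assumes "\<And>n. \<bar>a n - l\<bar> \<le> 1 / real (Suc n)"
  shows "a \<longlonglongrightarrow> l"
proof -
  have "(\<lambda>n. a n - l) \<longlonglongrightarrow> 0"
    by (rule Lim_null_comparison[OF _ LIMSEQ_inverse_real_of_nat])
       (use assms in \<open>auto simp: divide_inverse\<close>)
  then show ?thesis by (rule LIM_zero_cancel)
qed

lemma C_Linf_bounded_measurable_version:
  assumes "C_Linf K M f" and "compact K" and "Q \<subseteq> K" and "Q \<in> sets lebesgue"
  obtains u B where "u \<in> borel_measurable (lebesgue_on Q \<Otimes>\<^sub>M M)" and "\<And>z. \<bar>u z\<bar> \<le> B"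
    and "\<And>x. x \<in> Q \<Longrightarrow> AE \<omega> in M. u (x, \<omega>) = f x \<omega>"
proof -
  have "\<forall>n. \<exists>g. g \<in> borel_measurable (lebesgue_on Q \<Otimes>\<^sub>M M) \<and>
      (\<forall>x\<in>Q. AE \<omega> in M. \<bar>g (x, \<omega>) - f x \<omega>\<bar> \<le> 1 / real (Suc n))"
  proof
    fix n
    obtain g where "g \<in> borel_measurable (lebesgue_on Q \<Otimes>\<^sub>M M)"
      and "\<And>x. x \<in> Q \<Longrightarrow> AE \<omega> in M. \<bar>g (x, \<omega>) - f x \<omega>\<bar> \<le> 1 / real (Suc n)"
      by (rule C_Linf_step_approximation[OF assms, of "1 / real (Suc n)"]) auto
    then show "\<exists>g. g \<in> borel_measurable (lebesgue_on Q \<Otimes>\<^sub>M M) \<and>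
      (\<forall>x\<in>Q. AE \<omega> in M. \<bar>g (x, \<omega>) - f x \<omega>\<bar> \<le> 1 / real (Suc n))" by blast
  qed
  then obtain G where "\<forall>n. G n \<in> borel_measurable (lebesgue_on Q \<Otimes>\<^sub>M M) \<and>
      (\<forall>x\<in>Q. AE \<omega> in M. \<bar>G n (x, \<omega>) - f x \<omega>\<bar> \<le> 1 / real (Suc n))"
    by (rule choice[THEN exE])
  then have G: "\<And>n. G n \<in> borel_measurable (lebesgue_on Q \<Otimes>\<^sub>M M)"
    and G_close: "\<And>n x. x \<in> Q \<Longrightarrow> AE \<omega> in M. \<bar>G n (x, \<omega>) - f x \<omega>\<bar> \<le> 1 / real (Suc n)"
    by blast+
  obtain B where "0 \<le> B" and f_bounded: "\<And>x. x \<in> K \<Longrightarrow> AE \<omega> in M. \<bar>f x \<omega>\<bar> \<le> B"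
    using C_Linf_ess_bounded[OF assms(1,2)] by blast
  define u where "u z = max (- B) (min B (lim (\<lambda>n. G n z)))" for z
  have "u \<in> borel_measurable (lebesgue_on Q \<Otimes>\<^sub>M M)"
    unfolding u_def by (intro borel_measurable_max borel_measurable_min borel_measurable_const
        borel_measurable_uminus borel_measurable_lim_metric G)
  moreover have "\<bar>u z\<bar> \<le> B" for z using \<open>0 \<le> B\<close> unfolding u_def by auto
  moreover have "AE \<omega> in M. u (x, \<omega>) = f x \<omega>" if "x \<in> Q" for x
  proof -
    have "AE \<omega> in M. \<forall>n. \<bar>G n (x, \<omega>) - f x \<omega>\<bar> \<le> 1 / real (Suc n)"
      using G_close[OF that] by (simp add: AE_all_countable)
    moreover have "AE \<omega> in M. \<bar>f x \<omega>\<bar> \<le> B" using f_bounded that assms(3) by blast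
    ultimately show ?thesis
    proof eventually_elim
      case (elim \<omega>)
      then have "lim (\<lambda>n. G n (x, \<omega>)) = f x \<omega>"
        by (intro limI LIMSEQ_of_dist_le_inverse_Suc) blast
      then show ?case using elim(2) unfolding u_def by auto
    qed
  qed
  ultimately show ?thesis by (rule that)
qed

lemma dynamical_system_AE_shift:
  assumes "dynamical_system M T" and "AE \<omega> in M. P \<omega>"
  shows "AE \<omega> in M. P (T x \<omega>)"
proof -
  have measurable: "T x \<in> M \<rightarrow>\<^sub>M M" and preserving: "distr M M (T x) = M"
    using assms(1) unfolding dynamical_system_def by blast+
  have "AE \<omega> in distr M M (T x). P \<omega>" by (subst preserving) (rule assms(2))
  with measurable show ?thesis by (rule AE_distrD)
qed

lemma dynamical_system_measurable_shift:
  assumes "dynamical_system M T" and "u \<in> borel_measurable (lebesgue_on Q \<Otimes>\<^sub>M M)"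
  shows "(\<lambda>z. u (fst z, T (fst z) (snd z))) \<in> borel_measurable (lebesgue_on Q \<Otimes>\<^sub>M M)"
proof -
  have "fst \<in> lebesgue_on Q \<Otimes>\<^sub>M M \<rightarrow>\<^sub>M lebesgue"
    by (intro measurable_compose[OF measurable_fst] measurable_restrict_space1 measurable_ident_sets)
       simp
  then have pair: "(\<lambda>z. (fst z, snd z)) \<in> lebesgue_on Q \<Otimes>\<^sub>M M \<rightarrow>\<^sub>M lebesgue \<Otimes>\<^sub>M M"
    by (rule measurable_Pair[OF _ measurable_snd])
  have joint: "(\<lambda>(x, \<omega>). T x \<omega>) \<in> lebesgue \<Otimes>\<^sub>M M \<rightarrow>\<^sub>M M"
    using assms(1) unfolding dynamical_system_def by blast
  have "(\<lambda>z. T (fst z) (snd z)) \<in> lebesgue_on Q \<Otimes>\<^sub>M M \<rightarrow>\<^sub>M M"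
    using measurable_compose[OF pair joint] by simp
  then show ?thesis by (rule measurable_compose[OF measurable_Pair[OF measurable_fst] assms(2)])
qed

lemma defines_orlicz_of_bounded_version:
  assumes "young_function \<Phi>" and "finite_measure (lebesgue_on Q \<Otimes>\<^sub>M M)"
    and "u \<in> borel_measurable (lebesgue_on Q \<Otimes>\<^sub>M M)" and "\<And>z. \<bar>u z\<bar> \<le> B"
    and "\<And>x. x \<in> Q \<Longrightarrow> AE \<omega> in M. u (x, \<omega>) = g x \<omega>"
  shows "defines_orlicz \<Phi> Q M g"
  unfolding defines_orlicz_def
  using finite_measure.bounded_in_orlicz_space[OF assms(2,1,3,4)] assms(5) by blast

theorem mainTheorem6:
  fixes \<Phi> :: "real \<Rightarrow> real"
    and Q :: "'a::euclidean_space set"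
    and M :: "'w measure"
    and T :: "'a \<Rightarrow> 'w \<Rightarrow> 'w"
    and f :: "'a \<Rightarrow> 'w \<Rightarrow> real"
  assumes "young_function \<Phi>"
    and "open Q" and "bounded Q"
    and "dynamical_system M T"
    and "C_Linf (closure Q) M f"
  shows "admissible \<Phi> Q M T f"
proof -
  have "Q \<in> lmeasurable" using lmeasurable_open[OF assms(3,2)] .
  moreover have "prob_space M" using assms(4) unfolding dynamical_system_def by blast
  ultimately have finite: "finite_measure (lebesgue_on Q \<Otimes>\<^sub>M M)"
    by (intro finite_measure_pair_measure finite_measure_lebesgue_on) (auto simp: prob_space_def)
  obtain u B where u: "u \<in> borel_measurable (lebesgue_on Q \<Otimes>\<^sub>M M)" and bound: "\<And>z. \<bar>u z\<bar> \<le> B"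
    and u_version: "\<And>x. x \<in> Q \<Longrightarrow> AE \<omega> in M. u (x, \<omega>) = f x \<omega>"
    using C_Linf_bounded_measurable_version[OF assms(5) compact_closure[THEN iffD2, OF assms(3)]
        closure_subset fmeasurableD[OF \<open>Q \<in> lmeasurable\<close>]] by blast
  have "defines_orlicz \<Phi> Q M f"
    using assms(1) finite u bound u_version by (rule defines_orlicz_of_bounded_version)
  moreover have "defines_orlicz \<Phi> Q M (\<lambda>x \<omega>. f x (T x \<omega>))"
    using assms(1) finite dynamical_system_measurable_shift[OF assms(4) u] bound
  proof (rule defines_orlicz_of_bounded_version)
    fix x assume "x \<in> Q"
    show "AE \<omega> in M. u (fst (x, \<omega>), T (fst (x, \<omega>)) (snd (x, \<omega>))) = f x (T x \<omega>)"
      using dynamical_system_AE_shift[OF assms(4) u_version[OF \<open>x \<in> Q\<close>]] by simp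
  qed
  ultimately show ?thesis unfolding admissible_def ..
qed

end
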